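(* Let $(Y,D)$ be binary random variables and $Z$ a random vector; write $q_{ij}(z)=\mathbb P(Y=i,D=j\mid Z=z)$. In the generalized binary Roy model the following hold. (1) If $(Y_0,Y_1)$ is a pair of binary random variables independent of $Z$ with $Y=Y_1D+Y_0(1-D)$, then for almost all $z\in\mathrm{Supp}(Z)$: $$\begin{aligned} &0\le \mathbb P(Y_0=1,Y_1=1)\le q_{10}(z)+q_{11}(z),\qquad 0\le \mathbb P(Y_0=0,Y_1=0)\le q_{00}(z)+q_{01}(z),\\ &0\le \mathbb P(Y_0=1,Y_1=0)\le q_{10}(z)+q_{01}(z),\qquad 0\le \mathbb P(Y_0=0,Y_1=1)\le q_{00}(z)+q_{11}(z),\\ &q_{10}(z)\le \mathbb P(Y_0=1)\le 1-q_{00}(z),\qquad q_{11}(z)\le \mathbb P(Y_1=1)\le 1-q_{01}(z). \end{aligned}$$ (2) Conversely, if $(p_{00},p_{01},p_{10},p_{11})$ is a probability vector such that for almost all $z\in\mathrm{Supp}(Z)$: $p_{11}\le q_{10}(z)+q_{11}(z)$, $p_{00}\le q_{00}(z)+q_{01}(z)$, $p_{10}\le q_{10}(z)+q_{01}(z)$, $p_{01}\le q_{00}(z)+q_{11}(z)$, $q_{10}(z)\le p_{10}+p_{11}\le 1-q_{00}(z)$, $q_{11}(z)\le p_{01}+p_{11}\le 1-q_{01}(z)$, then there exist, on some probability space, random variables $(\tilde Y,\tilde D,\tilde Z,Y_0,Y_1)$ with $(\tilde Y,\tilde D,\tilde Z)$ distributed as $(Y,D,Z)$, $(Y_0,Y_1)$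 binary and independent of $\tilde Z$, $\tilde Y=Y_1\tilde D+Y_0(1-\tilde D)$, and $\mathbb P(Y_0=i,Y_1=j)=p_{ij}$ for all $i,j$.
   Context: Generalized binary Roy model: observed $Y$ and $D\in\{0,1\}$, unobserved binary potential outcomes $(Y_0,Y_1)$ (possibly dependent) with $Y=Y_1D+Y_0(1-D)$; no restriction is placed on how $D$ is selected, except for the exclusion restriction that the observed variable $Z$ affects sector selection but not outcomes, i.e. $(Y_0,Y_1)$ is independent of $Z$. $\mathrm{Supp}(Z)$ is the support of $Z$. *)

theory Defs
  imports "HOL-Probability.Probability"
begin

text \<open>Binary random variables are modelled as bool-valued (True = 1, False = 0).\<close>

definition cond_prob_YD_given_Z ::
  "'a measure \<Rightarrow> ('a \<Rightarrow> bool) \<Rightarrow> ('a \<Rightarrow> bool) \<Rightarrow> ('a \<Rightarrow> 'z::euclidean_space)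
     \<Rightarrow> (bool \<Rightarrow> bool \<Rightarrow> 'z \<Rightarrow> real) \<Rightarrow> bool" where
  "cond_prob_YD_given_Z M Y D Z q \<longleftrightarrow>
     (\<forall>i j. q i j \<in> borel_measurable borel \<and>
        integrable (distr M borel Z) (q i j) \<and>
        (\<forall>B \<in> sets borel.
           measure M {\<omega> \<in> space M. Y \<omega> = i \<and> D \<omega> = j \<and> Z \<omega> \<in> B}
             = (LINT z:B|distr M borel Z. q i j z)))"

text \<open>Independence of two random variables with possibly different codomains
  (the library's indep_var requires a common codomain type); this is exactly the
  library's indep_var definition unfolded: the generated sigma-algebras are independent.\<close>

definition indep_rv :: "'a measure \<Rightarrow> 'b measure \<Rightarrow> ('a \<Rightarrow> 'b) \<Rightarrow> 'c measure \<Rightarrow> ('a \<Rightarrow> 'c) \<Rightarrow> bool" where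
  "indep_rv M Ma X Mb W \<longleftrightarrow>
     X \<in> measurable M Ma \<and> W \<in> measurable M Mb \<and>
     prob_space.indep_set M {X -` A \<inter> space M | A. A \<in> sets Ma}
                            {W -` B \<inter> space M | B. B \<in> sets Mb}"

end

theory Submission
  imports Defs
begin

(*
  Necessity: if (Y0, Y1) is independent of Z, then for every Borel set B the event
  {Y0 = a, Y1 = b, Z in B} has probability P(Y0 = a, Y1 = b) P(Z in B) and is contained in
  {Y = a, D = 0, Z in B} union {Y = b, D = 1, Z in B}, whose probability is the integral of
  q_a0 + q_b1 over B; likewise {Y = a, D = 0} is contained in {Y0 = a} and {Y = b, D = 1} in
  {Y1 = b}. Comparing integrals over all Borel sets turns these into bounds for almost every z.

  Sharpness: for fixed z, the four cells (Y, D) = (i, j) of mass q_ij(z) and the four pairs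
  (Y0, Y1) = (a, b) of mass p_ab form an eight-cycle, cell (i, j) feeding only the two pairs whose
  coordinate j equals i. The flows along this cycle form a one-parameter family, and the bounds
  say exactly that one of them is nonnegative. Drawing the unobserved potential outcome as a coin
  with the resulting conditional weights given (Y, D, Z) leaves the law of (Y, D, Z) unchanged and
  gives (Y0, Y1) the law p, independently of Z.
*)

lemma sum_UNIV_bool: "(\<Sum>c\<in>UNIV. f c) = f False + (f True :: 'a::comm_monoid_add)"
  unfolding UNIV_bool by (simp add: add.commute)

lemma UNIV_bool_pair: "(UNIV :: (bool \<times> bool) set) = {(False, False), (False, True), (True, False), (True, True)}"
  by auto

lemma AE_le_if_set_integral_le:
  fixes f g :: "'a \<Rightarrow> real"
  assumes f[measurable]: "integrable M f" and g[measurable]: "integrable M g"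
    and le: "\<And>A. A \<in> sets M \<Longrightarrow> (LINT x:A|M. f x) \<le> (LINT x:A|M. g x)"
  shows "AE x in M. f x \<le> g x"
proof -
  define A where "A = {x \<in> space M. g x < f x}"
  have A[measurable]: "A \<in> sets M" unfolding A_def by measurable
  have "(LINT x:A|M. f x - g x) = (LINT x:A|M. f x) - (LINT x:A|M. g x)"
    using integrable_mult_indicator[OF A f] integrable_mult_indicator[OF A g]
    by (simp add: set_integrable_def)
  moreover have "0 \<le> (LINT x:A|M. f x - g x)"
    unfolding set_lebesgue_integral_def
    by (rule integral_nonneg_AE) (auto simp: A_def indicator_def)
  ultimately have "(LINT x:A|M. f x - g x) = 0" using le[OF A] by linarith
  then have "A \<in> null_sets M"
    by (intro null_if_pos_func_has_zero_int[where f="\<lambda>x. f x - g x"]) (use f g in \<open>auto simp: A_def\<close>)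
  then show ?thesis
    by (auto simp: AE_iff_null_sets A_def not_less elim!: null_sets_subset)
qed

context prob_space
begin

lemma indep_rvD:
  assumes "indep_rv M Ma X Mb W" and "A \<in> sets Ma" "B \<in> sets Mb"
  shows "prob (X -` A \<inter> space M \<inter> (W -` B \<inter> space M)) = prob (X -` A \<inter> space M) * prob (W -` B \<inter> space M)"
  using assms unfolding indep_rv_def by (blast intro: indep_setD)

lemma indep_rvI:
  assumes X: "X \<in> M \<rightarrow>\<^sub>M Ma" and W: "W \<in> M \<rightarrow>\<^sub>M Mb"
    and prod: "\<And>A B. A \<in> sets Ma \<Longrightarrow> B \<in> sets Mb \<Longrightarrow>
      prob (X -` A \<inter> space M \<inter> (W -` B \<inter> space M)) = prob (X -` A \<inter> space M) * prob (W -` B \<inter> space M)"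
  shows "indep_rv M Ma X Mb W"
  unfolding indep_rv_def using X W measurable_sets[OF X] measurable_sets[OF W]
  by (auto intro!: indep_setI prod)

end

section \<open>Randomisation by an auxiliary coin\<close>

(* The second coordinate is the coin; the third is almost surely True and only pads the sample
   space to the type 'a \<times> bool \<times> bool. *)
definition coin_extension :: "'a measure \<Rightarrow> ('a \<Rightarrow> bool \<Rightarrow> real) \<Rightarrow> ('a \<times> bool \<times> bool) measure" where
  "coin_extension M w =
     density (M \<Otimes>\<^sub>M count_space UNIV) (\<lambda>(\<omega>, c, e). if e then ennreal (w \<omega> c) else 0)"

lemma sets_coin_extension [simp]: "sets (coin_extension M w) = sets (M \<Otimes>\<^sub>M count_space UNIV)"
  by (simp add: coin_extension_def)

lemma space_coin_extension [simp]: "space (coin_extension M w) = space M \<times> UNIV"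
  by (simp add: coin_extension_def space_pair_measure)

lemma measurable_coin_extension [simp]: "measurable (coin_extension M w) K = measurable (M \<Otimes>\<^sub>M count_space UNIV) K"
  by (rule measurable_cong_sets) simp_all

lemma measurable_snd_count_space_pair [measurable]:
  "(\<lambda>x. fst (snd x)) \<in> M \<Otimes>\<^sub>M count_space (UNIV :: ('b \<times> 'c) set) \<rightarrow>\<^sub>M count_space UNIV"
  "(\<lambda>x. snd (snd x)) \<in> M \<Otimes>\<^sub>M count_space (UNIV :: ('b \<times> 'c) set) \<rightarrow>\<^sub>M count_space UNIV"
  by (rule measurable_compose[OF measurable_snd], simp)+

lemma emeasure_coin_extension:
  assumes w[measurable]: "\<And>c. (\<lambda>\<omega>. w \<omega> c) \<in> borel_measurable M"
    and X[measurable]: "X \<in> sets (M \<Otimes>\<^sub>M count_space UNIV)"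
  shows "emeasure (coin_extension M w) X = (\<integral>\<^sup>+\<omega>. (\<Sum>c\<in>UNIV. ennreal (w \<omega> c) * indicator X (\<omega>, c, True)) \<partial>M)"
proof -
  interpret sigma_finite_measure "count_space (UNIV :: (bool \<times> bool) set)"
    by (rule sigma_finite_measure_count_space)
  have "(\<lambda>x. ennreal (w (fst x) c)) \<in> borel_measurable (M \<Otimes>\<^sub>M count_space UNIV)" for c
    by measurable
  then have [measurable]: "(\<lambda>x. ennreal (w (fst x) (fst (snd x)))) \<in> borel_measurable (M \<Otimes>\<^sub>M count_space UNIV)"
    by (rule measurable_compose_countable) measurable
  have [measurable]: "(\<lambda>(\<omega>, c, e). if e then ennreal (w \<omega> c) else 0) \<in> borel_measurable (M \<Otimes>\<^sub>M count_space UNIV)"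
    unfolding case_prod_beta' by measurable
  have "emeasure (coin_extension M w) X =
      (\<integral>\<^sup>+x. (case x of (\<omega>, c, e) \<Rightarrow> if e then ennreal (w \<omega> c) else 0) * indicator X x \<partial>(M \<Otimes>\<^sub>M count_space UNIV))"
    unfolding coin_extension_def by (rule emeasure_density) measurable
  also have "\<dots> = (\<integral>\<^sup>+\<omega>. \<integral>\<^sup>+ce. (case (\<omega>, ce) of (\<omega>, c, e) \<Rightarrow> if e then ennreal (w \<omega> c) else 0) * indicator X (\<omega>, ce) \<partial>count_space UNIV \<partial>M)"
    by (rule nn_integral_fst[symmetric]) measurable
  also have "\<dots> = (\<integral>\<^sup>+\<omega>. (\<Sum>c\<in>UNIV. ennreal (w \<omega> c) * indicator X (\<omega>, c, True)) \<partial>M)"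
    by (intro nn_integral_cong)
      (simp add: nn_integral_count_space_finite UNIV_bool_pair UNIV_bool del: sum_mult_indicator)
  finally show ?thesis .
qed

lemma emeasure_coin_extension_Times_UNIV:
  assumes w[measurable]: "\<And>c. (\<lambda>\<omega>. w \<omega> c) \<in> borel_measurable M"
    and w_nonneg: "\<And>\<omega> c. 0 \<le> w \<omega> c" and w_sum: "\<And>\<omega>. w \<omega> True + w \<omega> False = 1"
    and A[measurable]: "A \<in> sets M"
  shows "emeasure (coin_extension M w) (A \<times> UNIV) = emeasure M A"
proof -
  have w_sum': "ennreal (w \<omega> False) + ennreal (w \<omega> True) = 1" for \<omega>
    using w_sum[of \<omega>] w_nonneg[of \<omega>] by (simp flip: ennreal_plus)
  have "emeasure (coin_extension M w) (A \<times> UNIV) =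
      (\<integral>\<^sup>+\<omega>. (\<Sum>c\<in>UNIV. ennreal (w \<omega> c) * indicator (A \<times> UNIV) (\<omega>, c, True)) \<partial>M)"
    by (rule emeasure_coin_extension) measurable
  also have "\<dots> = (\<integral>\<^sup>+\<omega>. indicator A \<omega> \<partial>M)"
    by (rule nn_integral_cong) (simp add: UNIV_bool w_sum' split: split_indicator del: sum_mult_indicator)
  finally show ?thesis by simp
qed

lemma prob_space_coin_extension:
  assumes "prob_space M" and "\<And>c. (\<lambda>\<omega>. w \<omega> c) \<in> borel_measurable M"
    and "\<And>\<omega> c. 0 \<le> w \<omega> c" and "\<And>\<omega>. w \<omega> True + w \<omega> False = 1"
  shows "prob_space (coin_extension M w)"
  using emeasure_coin_extension_Times_UNIV[OF assms(2-4) sets.top] prob_space.emeasure_space_1[OF assms(1)]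
  by (intro prob_spaceI) simp

lemma distr_fst_coin_extension:
  assumes w: "\<And>c. (\<lambda>\<omega>. w \<omega> c) \<in> borel_measurable M"
    and "\<And>\<omega> c. 0 \<le> w \<omega> c" and "\<And>\<omega>. w \<omega> True + w \<omega> False = 1"
  shows "distr (coin_extension M w) M fst = M"
proof (rule measure_eqI)
  fix A assume "A \<in> sets (distr (coin_extension M w) M fst)"
  then have A: "A \<in> sets M" by simp
  then have "fst -` A \<inter> space (coin_extension M w) = A \<times> UNIV"
    using sets.sets_into_space by auto
  then show "emeasure (distr (coin_extension M w) M fst) A = emeasure M A"
    using A emeasure_coin_extension_Times_UNIV[OF assms A] by (simp add: emeasure_distr)
qed simp

section \<open>Splitting the observed cells\<close>

definition prob_vector :: "(bool \<Rightarrow> bool \<Rightarrow> real) \<Rightarrow> bool" where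
  "prob_vector p \<longleftrightarrow> (\<forall>i j. 0 \<le> p i j) \<and> p False False + p False True + p True False + p True True = 1"

definition roy_compatible :: "(bool \<Rightarrow> bool \<Rightarrow> real) \<Rightarrow> (bool \<Rightarrow> bool \<Rightarrow> real) \<Rightarrow> bool" where
  "roy_compatible p Q \<longleftrightarrow> prob_vector p \<and> prob_vector Q \<and>
     p True True \<le> Q True False + Q True True \<and>
     p False False \<le> Q False False + Q False True \<and>
     p True False \<le> Q True False + Q False True \<and>
     p False True \<le> Q False False + Q True True \<and>
     Q True False \<le> p True False + p True True \<and>
     p True False + p True True \<le> 1 - Q False False \<and>
     Q True True \<le> p False True + p True True \<and>
     p False True + p True True \<le> 1 - Q False True"

(* The pair (Y0, Y1) when y is the outcome observed in sector d and c the unobserved one. *)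
definition potential_outcomes :: "bool \<Rightarrow> bool \<Rightarrow> bool \<Rightarrow> bool \<times> bool" where
  "potential_outcomes y d c = (if d then (c, y) else (y, c))"

lemma observed_potential_outcomes:
  "(if d then snd (potential_outcomes y d c) else fst (potential_outcomes y d c)) = y"
  by (simp add: potential_outcomes_def)

(* Cell (i, j) of (Y, D) sends the mass coupling_mass p Q i j c to the pair potential_outcomes i j c.
   Along the eight-cycle of cells and pairs every flow is determined by the flow t from cell (0, 0)
   to pair (0, 0); coupling_offset is the least t for which the four flows increasing in t are
   nonnegative, and the Roy bounds make the other four nonnegative as well. *)
definition coupling_offset :: "(bool \<Rightarrow> bool \<Rightarrow> real) \<Rightarrow> (bool \<Rightarrow> bool \<Rightarrow> real) \<Rightarrow> real" where
  "coupling_offset p Q =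
     max (max 0 (p False False - Q False True)) (max (Q False False - p False True) (p False False + p True False - Q False True - Q True False))"

fun coupling_mass :: "(bool \<Rightarrow> bool \<Rightarrow> real) \<Rightarrow> (bool \<Rightarrow> bool \<Rightarrow> real) \<Rightarrow> bool \<Rightarrow> bool \<Rightarrow> bool \<Rightarrow> real" where
  "coupling_mass p Q False False False = coupling_offset p Q"
| "coupling_mass p Q False False True = Q False False - coupling_offset p Q"
| "coupling_mass p Q False True False = p False False - coupling_offset p Q"
| "coupling_mass p Q False True True = Q False True - p False False + coupling_offset p Q"
| "coupling_mass p Q True False False = p True False + p False False - Q False True - coupling_offset p Q"
| "coupling_mass p Q True False True = Q True False - p True False - p False False + Q False True + coupling_offset p Q"
| "coupling_mass p Q True True False = p False True - Q False False + coupling_offset p Q"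
| "coupling_mass p Q True True True = Q True True - p False True + Q False False - coupling_offset p Q"

lemma coupling_offset_le:
  assumes "roy_compatible p Q"
  shows "coupling_offset p Q \<le> min (Q False False) (p False False)"
    and "coupling_offset p Q \<le> min (p True False + p False False - Q False True) (Q False False + Q True True - p False True)"
  using assms
  unfolding roy_compatible_def prob_vector_def all_bool_eq coupling_offset_def max.bounded_iff min.bounded_iff
  by (elim conjE; intro conjI; linarith)+

lemma coupling_mass_nonneg: "roy_compatible p Q \<Longrightarrow> 0 \<le> coupling_mass p Q i j c"
  using coupling_offset_le[of p Q] by (cases i; cases j; cases c) (simp_all add: coupling_offset_def)

lemma coupling_mass_sum: "coupling_mass p Q i j True + coupling_mass p Q i j False = Q i j"
  by (cases i; cases j) simp_all

lemma coupling_mass_to_pair: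
  "roy_compatible p Q \<Longrightarrow> coupling_mass p Q a False b + coupling_mass p Q b True a = p a b"
  unfolding roy_compatible_def prob_vector_def by (cases a; cases b) simp_all

lemma sum_coupling_mass:
  assumes "roy_compatible p Q"
  shows "(\<Sum>i\<in>UNIV. \<Sum>j\<in>UNIV. \<Sum>c\<in>UNIV. if potential_outcomes i j c \<in> S then coupling_mass p Q i j c else 0) =
    (\<Sum>(a, b)\<in>S. p a b)"
proof -
  have "(\<Sum>(a, b)\<in>S. p a b) = (\<Sum>(a, b)\<in>UNIV. if (a, b) \<in> S then p a b else 0)"
    by (simp add: sum.If_cases case_prod_beta)
  then show ?thesis
    by (simp add: coupling_mass_to_pair[OF assms, symmetric] UNIV_bool_pair UNIV_bool potential_outcomes_def
        del: coupling_mass.simps)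
qed

(* The fallback of_bool c only matters on empty cells and on a null set of z. *)
definition coin_weight :: "(bool \<Rightarrow> bool \<Rightarrow> real) \<Rightarrow> (bool \<Rightarrow> bool \<Rightarrow> real) \<Rightarrow> bool \<Rightarrow> bool \<Rightarrow> bool \<Rightarrow> real" where
  "coin_weight p Q i j c = (if roy_compatible p Q \<and> 0 < Q i j then coupling_mass p Q i j c / Q i j else of_bool c)"

lemma coin_weight_nonneg: "0 \<le> coin_weight p Q i j c"
  by (simp add: coin_weight_def coupling_mass_nonneg)

lemma coin_weight_sum: "coin_weight p Q i j True + coin_weight p Q i j False = 1"
  using coupling_mass_sum[of p Q i j] by (simp add: coin_weight_def add_divide_distrib[symmetric])

lemma mult_coin_weight:
  assumes "roy_compatible p Q"
  shows "Q i j * coin_weight p Q i j c = coupling_mass p Q i j c"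
proof (cases "0 < Q i j")
  case False
  have "0 \<le> Q i j" using assms by (simp add: roy_compatible_def prob_vector_def)
  with False coupling_mass_sum[of p Q i j] coupling_mass_nonneg[OF assms, of i j True]
    coupling_mass_nonneg[OF assms, of i j False]
  have "coupling_mass p Q i j c = 0" by (cases c) auto
  with False show ?thesis using \<open>0 \<le> Q i j\<close> by simp
qed (use assms in \<open>simp add: coin_weight_def\<close>)

lemma sum_mult_coin_weight:
  assumes "roy_compatible p Q"
  shows "(\<Sum>i\<in>UNIV. \<Sum>j\<in>UNIV. Q i j *
      (\<Sum>c\<in>UNIV. if potential_outcomes i j c \<in> S then coin_weight p Q i j c else 0)) = (\<Sum>(a, b)\<in>S. p a b)"
proof -
  have "Q i j * (\<Sum>c\<in>UNIV. if potential_outcomes i j c \<in> S then coin_weight p Q i j c else 0) =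
      (\<Sum>c\<in>UNIV. if potential_outcomes i j c \<in> S then coupling_mass p Q i j c else 0)" for i j
    by (simp add: sum_UNIV_bool mult_coin_weight[OF assms, symmetric] algebra_simps)
  then show ?thesis
    using sum_coupling_mass[OF assms] by simp
qed

lemma borel_measurable_coin_weight [measurable]:
  assumes [measurable]: "\<And>i j. (\<lambda>z. Q z i j) \<in> borel_measurable M"
  shows "(\<lambda>z. coin_weight p (Q z) i j c) \<in> borel_measurable M"
proof -
  have [measurable]: "(\<lambda>z. coupling_offset p (Q z)) \<in> borel_measurable M"
    unfolding coupling_offset_def by measurable
  have [measurable]: "(\<lambda>z. coupling_mass p (Q z) i j c) \<in> borel_measurable M"
    by (cases i; cases j; cases c) simp_all
  have [measurable]: "Measurable.pred M (\<lambda>z. roy_compatible p (Q z))"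
    unfolding roy_compatible_def prob_vector_def all_bool_eq by measurable
  show ?thesis
    unfolding coin_weight_def by measurable
qed

locale roy_data = prob_space M for M :: "'a measure" +
  fixes Y D :: "'a \<Rightarrow> bool" and Z :: "'a \<Rightarrow> 'z::euclidean_space" and q :: "bool \<Rightarrow> bool \<Rightarrow> 'z \<Rightarrow> real"
  assumes measurable_Y [measurable]: "Y \<in> M \<rightarrow>\<^sub>M count_space UNIV"
    and measurable_D [measurable]: "D \<in> M \<rightarrow>\<^sub>M count_space UNIV"
    and measurable_Z [measurable]: "Z \<in> borel_measurable M"
    and cond_prob: "cond_prob_YD_given_Z M Y D Z q"
begin

abbreviation law_Z :: "'z measure" where
  "law_Z \<equiv> distr M borel Z"

lemma prob_space_law_Z: "prob_space law_Z"
  by (rule prob_space_distr) simp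

lemma measure_law_Z: "B \<in> sets borel \<Longrightarrow> measure law_Z B = prob (Z -` B \<inter> space M)"
  by (simp add: measure_distr)

lemma borel_measurable_cond_prob [measurable]: "q i j \<in> borel_measurable borel"
  using cond_prob by (simp add: cond_prob_YD_given_Z_def)

lemma integrable_cond_prob: "integrable law_Z (q i j)"
  using cond_prob by (simp add: cond_prob_YD_given_Z_def)

lemma set_integrable_cond_prob: "B \<in> sets borel \<Longrightarrow> set_integrable law_Z B (q i j)"
  using integrable_mult_indicator[of B law_Z, OF _ integrable_cond_prob] by (simp add: set_integrable_def)

lemma set_integral_cond_prob:
  "B \<in> sets borel \<Longrightarrow> (LINT z:B|law_Z. q i j z) = prob {\<omega> \<in> space M. Y \<omega> = i \<and> D \<omega> = j \<and> Z \<omega> \<in> B}"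
  using cond_prob by (simp add: cond_prob_YD_given_Z_def)

lemma integrable_const_law_Z: "integrable law_Z (\<lambda>_. c)"
  using prob_space.finite_measure[OF prob_space_law_Z] by (rule finite_measure.integrable_const)

lemma set_integral_const_law_Z:
  "B \<in> sets borel \<Longrightarrow> (LINT z:B|law_Z. c) = c * prob (Z -` B \<inter> space M)"
  using prob_space.emeasure_space_1[OF prob_space_law_Z]
  by (subst set_integral_const) (auto simp: measure_law_Z emeasure_distr)

lemma prob_Z_eq_sum_cells:
  assumes [measurable]: "B \<in> sets borel"
  shows "prob (Z -` B \<inter> space M) = (\<Sum>(i, j)\<in>UNIV. prob {\<omega> \<in> space M. Y \<omega> = i \<and> D \<omega> = j \<and> Z \<omega> \<in> B})"
proof -
  have "Z -` B \<inter> space M = (\<Union>(i, j)\<in>UNIV. {\<omega> \<in> space M. Y \<omega> = i \<and> D \<omega> = j \<and> Z \<omega> \<in> B})"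
    by auto
  also have "prob \<dots> = (\<Sum>(i, j)\<in>UNIV. prob {\<omega> \<in> space M. Y \<omega> = i \<and> D \<omega> = j \<and> Z \<omega> \<in> B})"
    by (subst finite_measure_finite_Union) (auto simp: disjoint_family_on_def case_prod_beta)
  finally show ?thesis .
qed

lemma AE_prob_vector_cond_prob: "AE z in law_Z. prob_vector (\<lambda>i j. q i j z)"
proof -
  have "AE z in law_Z. 0 \<le> q i j z" for i j
  proof (rule AE_le_if_set_integral_le)
    fix B assume "B \<in> sets law_Z"
    then show "(LINT z:B|law_Z. 0) \<le> (LINT z:B|law_Z. q i j z)"
      by (simp add: set_integral_cond_prob)
  qed (simp_all add: integrable_cond_prob)
  then have nonneg: "AE z in law_Z. \<forall>i j. 0 \<le> q i j z"
    by (simp add: AE_all_countable)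
  have "AE z in law_Z. (\<Sum>(i, j)\<in>UNIV. q i j z) = 1"
  proof (rule density_unique_real)
    fix B assume "B \<in> sets law_Z"
    then have B: "B \<in> sets borel" by simp
    have "(LINT z:B|law_Z. (\<Sum>(i, j)\<in>UNIV. q i j z)) = (\<Sum>(i, j)\<in>UNIV. LINT z:B|law_Z. q i j z)"
      using set_integrable_cond_prob[OF B] unfolding set_lebesgue_integral_def set_integrable_def
      by (simp add: sum_distrib_left case_prod_beta del: sum_indicator_mult)
    also have "\<dots> = (LINT z:B|law_Z. 1)"
      using B by (simp add: set_integral_cond_prob set_integral_const_law_Z prob_Z_eq_sum_cells)
    finally show "(LINT z:B|law_Z. (\<Sum>(i, j)\<in>UNIV. q i j z)) = (LINT z:B|law_Z. 1)" .
  qed (auto simp: integrable_cond_prob integrable_const_law_Z)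
  with nonneg show ?thesis
    by eventually_elim (simp add: prob_vector_def UNIV_bool_pair add.assoc)
qed

lemma distr_density_cell:
  "distr (density M (indicator {\<omega> \<in> space M. Y \<omega> = i \<and> D \<omega> = j})) borel Z = density law_Z (\<lambda>z. ennreal (q i j z))"
proof (rule measure_eqI)
  fix B assume "B \<in> sets (distr (density M (indicator {\<omega> \<in> space M. Y \<omega> = i \<and> D \<omega> = j})) borel Z)"
  then have B[measurable]: "B \<in> sets borel" by simp
  have q_nonneg: "AE z in law_Z. 0 \<le> indicator B z * q i j z"
    using AE_prob_vector_cond_prob by eventually_elim (simp add: prob_vector_def)
  have "emeasure (distr (density M (indicator {\<omega> \<in> space M. Y \<omega> = i \<and> D \<omega> = j})) borel Z) B =
      (\<integral>\<^sup>+\<omega>. indicator {\<omega> \<in> space M. Y \<omega> = i \<and> D \<omega> = j} \<omega> * indicator (Z -` B \<inter> space M) \<omega> \<partial>M)"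
    by (subst emeasure_distr) (auto intro: emeasure_density)
  also have "\<dots> = (\<integral>\<^sup>+\<omega>. indicator {\<omega> \<in> space M. Y \<omega> = i \<and> D \<omega> = j \<and> Z \<omega> \<in> B} \<omega> \<partial>M)"
    by (intro nn_integral_cong) (simp split: split_indicator)
  also have "\<dots> = ennreal (LINT z:B|law_Z. q i j z)"
    by (simp add: set_integral_cond_prob emeasure_eq_measure)
  also have "\<dots> = (\<integral>\<^sup>+z. ennreal (indicator B z * q i j z) \<partial>law_Z)"
    using set_integrable_cond_prob[OF B] q_nonneg unfolding set_lebesgue_integral_def set_integrable_def
    by (simp add: nn_integral_eq_integral)
  also have "\<dots> = emeasure (density law_Z (\<lambda>z. ennreal (q i j z))) B"
    by (subst emeasure_density) (auto intro!: nn_integral_cong split: split_indicator)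
  finally show "emeasure (distr (density M (indicator {\<omega> \<in> space M. Y \<omega> = i \<and> D \<omega> = j})) borel Z) B =
      emeasure (density law_Z (\<lambda>z. ennreal (q i j z))) B" .
qed simp

lemma nn_integral_cond_prob:
  assumes [measurable]: "\<And>i j. g i j \<in> borel_measurable borel"
  shows "(\<integral>\<^sup>+\<omega>. g (Y \<omega>) (D \<omega>) (Z \<omega>) \<partial>M) = (\<integral>\<^sup>+z. (\<Sum>i\<in>UNIV. \<Sum>j\<in>UNIV. ennreal (q i j z) * g i j z) \<partial>law_Z)"
proof -
  have cell: "(\<integral>\<^sup>+\<omega>. indicator {\<omega> \<in> space M. Y \<omega> = i \<and> D \<omega> = j} \<omega> * g i j (Z \<omega>) \<partial>M) =
      (\<integral>\<^sup>+z. ennreal (q i j z) * g i j z \<partial>law_Z)" for i j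
  proof -
    have "(\<integral>\<^sup>+\<omega>. indicator {\<omega> \<in> space M. Y \<omega> = i \<and> D \<omega> = j} \<omega> * g i j (Z \<omega>) \<partial>M) =
        (\<integral>\<^sup>+z. g i j z \<partial>distr (density M (indicator {\<omega> \<in> space M. Y \<omega> = i \<and> D \<omega> = j})) borel Z)"
      by (subst nn_integral_distr) (simp_all add: nn_integral_density)
    then show ?thesis
      by (simp add: distr_density_cell nn_integral_density)
  qed
  have "(\<integral>\<^sup>+\<omega>. g (Y \<omega>) (D \<omega>) (Z \<omega>) \<partial>M) =
      (\<integral>\<^sup>+\<omega>. (\<Sum>i\<in>UNIV. \<Sum>j\<in>UNIV. indicator {\<omega> \<in> space M. Y \<omega> = i \<and> D \<omega> = j} \<omega> * g i j (Z \<omega>)) \<partial>M)"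
    by (intro nn_integral_cong) (simp add: UNIV_bool split: split_indicator del: sum_indicator_mult)
  also have "\<dots> = (\<Sum>i\<in>UNIV. \<Sum>j\<in>UNIV. \<integral>\<^sup>+\<omega>. indicator {\<omega> \<in> space M. Y \<omega> = i \<and> D \<omega> = j} \<omega> * g i j (Z \<omega>) \<partial>M)"
    by (simp add: nn_integral_sum del: sum_indicator_mult)
  also have "\<dots> = (\<integral>\<^sup>+z. (\<Sum>i\<in>UNIV. \<Sum>j\<in>UNIV. ennreal (q i j z) * g i j z) \<partial>law_Z)"
    by (simp add: nn_integral_sum cell del: sum_indicator_mult)
  finally show ?thesis .
qed

end

section \<open>Necessity of the bounds\<close>

locale roy_model = roy_data +
  fixes Y0 Y1 :: "'a \<Rightarrow> bool"
  assumes measurable_Y0 [measurable]: "Y0 \<in> M \<rightarrow>\<^sub>M count_space UNIV"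
    and measurable_Y1 [measurable]: "Y1 \<in> M \<rightarrow>\<^sub>M count_space UNIV"
    and indep_Z_potential_outcomes: "indep_rv M borel Z (count_space UNIV) (\<lambda>\<omega>. (Y0 \<omega>, Y1 \<omega>))"
    and observed_outcome: "\<And>\<omega>. \<omega> \<in> space M \<Longrightarrow> Y \<omega> = (if D \<omega> then Y1 \<omega> else Y0 \<omega>)"
begin

lemma prob_potential_outcomes_Z:
  assumes "B \<in> sets borel"
  shows "prob {\<omega> \<in> space M. (Y0 \<omega>, Y1 \<omega>) \<in> S \<and> Z \<omega> \<in> B} =
    prob {\<omega> \<in> space M. (Y0 \<omega>, Y1 \<omega>) \<in> S} * prob (Z -` B \<inter> space M)"
proof -
  have "prob (Z -` B \<inter> space M \<inter> ((\<lambda>\<omega>. (Y0 \<omega>, Y1 \<omega>)) -` S \<inter> space M)) =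
      prob (Z -` B \<inter> space M) * prob ((\<lambda>\<omega>. (Y0 \<omega>, Y1 \<omega>)) -` S \<inter> space M)"
    using indep_rvD[OF indep_Z_potential_outcomes assms] by simp
  moreover have "Z -` B \<inter> space M \<inter> ((\<lambda>\<omega>. (Y0 \<omega>, Y1 \<omega>)) -` S \<inter> space M) =
      {\<omega> \<in> space M. (Y0 \<omega>, Y1 \<omega>) \<in> S \<and> Z \<omega> \<in> B}"
    by auto
  moreover have "(\<lambda>\<omega>. (Y0 \<omega>, Y1 \<omega>)) -` S \<inter> space M = {\<omega> \<in> space M. (Y0 \<omega>, Y1 \<omega>) \<in> S}"
    by auto
  ultimately show ?thesis by simp
qed

lemma AE_prob_potential_outcomes_le:
  "AE z in law_Z. prob {\<omega> \<in> space M. Y0 \<omega> = a \<and> Y1 \<omega> = b} \<le> q a False z + q b True z"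
proof (rule AE_le_if_set_integral_le)
  fix B assume "B \<in> sets law_Z"
  then have B [measurable]: "B \<in> sets borel" by simp
  have "(LINT z:B|law_Z. prob {\<omega> \<in> space M. Y0 \<omega> = a \<and> Y1 \<omega> = b}) =
      prob {\<omega> \<in> space M. (Y0 \<omega>, Y1 \<omega>) \<in> {(a, b)} \<and> Z \<omega> \<in> B}"
    using prob_potential_outcomes_Z[OF B, of "{(a, b)}"] by (simp add: set_integral_const_law_Z)
  also have "\<dots> \<le> prob ({\<omega> \<in> space M. Y \<omega> = a \<and> D \<omega> = False \<and> Z \<omega> \<in> B} \<union> {\<omega> \<in> space M. Y \<omega> = b \<and> D \<omega> = True \<and> Z \<omega> \<in> B})"
    by (rule finite_measure_mono) (auto simp: observed_outcome split: if_splits)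
  also have "\<dots> \<le> (LINT z:B|law_Z. q a False z) + (LINT z:B|law_Z. q b True z)"
    unfolding set_integral_cond_prob[OF B] by (rule measure_Un_le) simp_all
  also have "\<dots> = (LINT z:B|law_Z. q a False z + q b True z)"
    using set_integrable_cond_prob[OF B] by (simp add: set_integral_add)
  finally show "(LINT z:B|law_Z. prob {\<omega> \<in> space M. Y0 \<omega> = a \<and> Y1 \<omega> = b}) \<le> (LINT z:B|law_Z. q a False z + q b True z)" .
qed (simp_all add: integrable_cond_prob integrable_const_law_Z)

lemma AE_cond_prob_le_prob_Y0: "AE z in law_Z. q a False z \<le> prob {\<omega> \<in> space M. Y0 \<omega> = a}"
proof (rule AE_le_if_set_integral_le)
  fix B assume "B \<in> sets law_Z"
  then have B [measurable]: "B \<in> sets borel" by simp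
  have "prob {\<omega> \<in> space M. Y \<omega> = a \<and> D \<omega> = False \<and> Z \<omega> \<in> B} \<le> prob {\<omega> \<in> space M. (Y0 \<omega>, Y1 \<omega>) \<in> {a} \<times> UNIV \<and> Z \<omega> \<in> B}"
    by (rule finite_measure_mono) (auto simp: observed_outcome)
  then show "(LINT z:B|law_Z. q a False z) \<le> (LINT z:B|law_Z. prob {\<omega> \<in> space M. Y0 \<omega> = a})"
    using prob_potential_outcomes_Z[OF B, of "{a} \<times> UNIV"] by (simp add: set_integral_const_law_Z set_integral_cond_prob)
qed (simp_all add: integrable_cond_prob integrable_const_law_Z)

lemma AE_cond_prob_le_prob_Y1: "AE z in law_Z. q b True z \<le> prob {\<omega> \<in> space M. Y1 \<omega> = b}"
proof (rule AE_le_if_set_integral_le)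
  fix B assume "B \<in> sets law_Z"
  then have B [measurable]: "B \<in> sets borel" by simp
  have "prob {\<omega> \<in> space M. Y \<omega> = b \<and> D \<omega> = True \<and> Z \<omega> \<in> B} \<le> prob {\<omega> \<in> space M. (Y0 \<omega>, Y1 \<omega>) \<in> UNIV \<times> {b} \<and> Z \<omega> \<in> B}"
    by (rule finite_measure_mono) (auto simp: observed_outcome)
  then show "(LINT z:B|law_Z. q b True z) \<le> (LINT z:B|law_Z. prob {\<omega> \<in> space M. Y1 \<omega> = b})"
    using prob_potential_outcomes_Z[OF B, of "UNIV \<times> {b}"] by (simp add: set_integral_const_law_Z set_integral_cond_prob)
qed (simp_all add: integrable_cond_prob integrable_const_law_Z)

end

section \<open>Sharpness of the bounds\<close>

context roy_data
begin

definition roy_extension :: "(bool \<Rightarrow> bool \<Rightarrow> real) \<Rightarrow> ('a \<times> bool \<times> bool) measure" where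
  "roy_extension p = coin_extension M (\<lambda>\<omega>. coin_weight p (\<lambda>i j. q i j (Z \<omega>)) (Y \<omega>) (D \<omega>))"

lemma prob_space_roy_extension: "prob_space (roy_extension p)"
  unfolding roy_extension_def
  by (rule prob_space_coin_extension) (simp_all add: prob_space_axioms coin_weight_nonneg coin_weight_sum)

lemma distr_roy_extension:
  "distr (roy_extension p) (count_space UNIV \<Otimes>\<^sub>M count_space UNIV \<Otimes>\<^sub>M borel) (\<lambda>x. (Y (fst x), D (fst x), Z (fst x))) =
    distr M (count_space UNIV \<Otimes>\<^sub>M count_space UNIV \<Otimes>\<^sub>M borel) (\<lambda>\<omega>. (Y \<omega>, D \<omega>, Z \<omega>))"
proof -
  have "distr (roy_extension p) M fst = M"
    unfolding roy_extension_def
    by (rule distr_fst_coin_extension) (simp_all add: coin_weight_nonneg coin_weight_sum)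
  moreover have "distr (distr (roy_extension p) M fst) (count_space UNIV \<Otimes>\<^sub>M count_space UNIV \<Otimes>\<^sub>M borel) (\<lambda>\<omega>. (Y \<omega>, D \<omega>, Z \<omega>)) =
      distr (roy_extension p) (count_space UNIV \<Otimes>\<^sub>M count_space UNIV \<Otimes>\<^sub>M borel) (\<lambda>x. (Y (fst x), D (fst x), Z (fst x)))"
    by (subst distr_distr) (simp_all add: roy_extension_def comp_def)
  ultimately show ?thesis by simp
qed

lemma emeasure_roy_extension:
  assumes p: "prob_vector p" and compatible: "AE z in law_Z. roy_compatible p (\<lambda>i j. q i j z)"
    and B [measurable]: "B \<in> sets borel"
  shows "emeasure (roy_extension p)
      {x \<in> space M \<times> UNIV. Z (fst x) \<in> B \<and> potential_outcomes (Y (fst x)) (D (fst x)) (fst (snd x)) \<in> S} =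
    ennreal ((\<Sum>(a, b)\<in>S. p a b) * prob (Z -` B \<inter> space M))"
proof -
  define X :: "('a \<times> bool \<times> bool) set" where
    "X = {x \<in> space M \<times> UNIV. Z (fst x) \<in> B \<and> potential_outcomes (Y (fst x)) (D (fst x)) (fst (snd x)) \<in> S}"
  define r where
    "r i j z = (\<Sum>c\<in>UNIV. if potential_outcomes i j c \<in> S then coin_weight p (\<lambda>i j. q i j z) i j c else 0)" for i j z
  have r_nonneg: "0 \<le> r i j z" for i j z
    unfolding r_def by (auto intro!: sum_nonneg simp: coin_weight_nonneg)
  have "X = {x \<in> space (M \<Otimes>\<^sub>M count_space UNIV). Z (fst x) \<in> B \<and>
      potential_outcomes (Y (fst x)) (D (fst x)) (fst (snd x)) \<in> S}"
    by (simp add: X_def space_pair_measure)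
  also have "\<dots> \<in> sets (M \<Otimes>\<^sub>M count_space UNIV)"
    by measurable
  finally have [measurable]: "X \<in> sets (M \<Otimes>\<^sub>M count_space UNIV)" .
  have [measurable]: "r i j \<in> borel_measurable borel" for i j
    unfolding r_def by measurable
  have "emeasure (roy_extension p) X =
      (\<integral>\<^sup>+\<omega>. (\<Sum>c\<in>UNIV. ennreal (coin_weight p (\<lambda>i j. q i j (Z \<omega>)) (Y \<omega>) (D \<omega>) c) * indicator X (\<omega>, c, True)) \<partial>M)"
    unfolding roy_extension_def by (rule emeasure_coin_extension) measurable
  also have "\<dots> = (\<integral>\<^sup>+\<omega>. ennreal (indicator B (Z \<omega>) * r (Y \<omega>) (D \<omega>) (Z \<omega>)) \<partial>M)"
    unfolding r_def sum_UNIV_bool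
    by (intro nn_integral_cong) (auto simp: X_def coin_weight_nonneg ennreal_plus split: split_indicator)
  also have "\<dots> = (\<integral>\<^sup>+z. (\<Sum>i\<in>UNIV. \<Sum>j\<in>UNIV. ennreal (q i j z) * ennreal (indicator B z * r i j z)) \<partial>law_Z)"
    by (rule nn_integral_cond_prob) measurable
  also have "\<dots> = (\<integral>\<^sup>+z. ennreal (\<Sum>(a, b)\<in>S. p a b) * indicator B z \<partial>law_Z)"
    using compatible
  proof (rule nn_integral_cong_AE[OF AE_mp], intro AE_I2 impI)
    fix z assume z: "roy_compatible p (\<lambda>i j. q i j z)"
    then have "ennreal (q i j z) * ennreal (indicator B z * r i j z) = ennreal (indicator B z * (q i j z * r i j z))" for i j
      using r_nonneg by (subst ennreal_mult[symmetric]) (auto simp: roy_compatible_def prob_vector_def algebra_simps)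
    moreover have "0 \<le> q i j z * r i j z" for i j
      using z r_nonneg by (simp add: roy_compatible_def prob_vector_def)
    ultimately have "(\<Sum>i\<in>UNIV. \<Sum>j\<in>UNIV. ennreal (q i j z) * ennreal (indicator B z * r i j z)) =
        ennreal (indicator B z * (\<Sum>i\<in>UNIV. \<Sum>j\<in>UNIV. q i j z * r i j z))"
      by (simp add: sum_ennreal sum_nonneg sum_distrib_left)
    then show "(\<Sum>i\<in>UNIV. \<Sum>j\<in>UNIV. ennreal (q i j z) * ennreal (indicator B z * r i j z)) =
        ennreal (\<Sum>(a, b)\<in>S. p a b) * indicator B z"
      unfolding r_def sum_mult_coin_weight[OF z] by (simp split: split_indicator)
  qed
  also have "\<dots> = ennreal ((\<Sum>(a, b)\<in>S. p a b) * prob (Z -` B \<inter> space M))"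
    using p by (simp add: nn_integral_cmult_indicator emeasure_distr emeasure_eq_measure ennreal_mult
        prob_vector_def sum_nonneg case_prod_beta)
  finally show ?thesis unfolding X_def .
qed

lemma roy_model_realization:
  assumes p: "prob_vector p" and compatible: "AE z in law_Z. roy_compatible p (\<lambda>i j. q i j z)"
  obtains M' :: "('a \<times> bool \<times> bool) measure" and Yt Dt Zt Y0 Y1 where
    "prob_space M'"
    "Yt \<in> M' \<rightarrow>\<^sub>M count_space UNIV" "Dt \<in> M' \<rightarrow>\<^sub>M count_space UNIV" "Zt \<in> borel_measurable M'"
    "Y0 \<in> M' \<rightarrow>\<^sub>M count_space UNIV" "Y1 \<in> M' \<rightarrow>\<^sub>M count_space UNIV"
    "distr M' (count_space UNIV \<Otimes>\<^sub>M count_space UNIV \<Otimes>\<^sub>M borel) (\<lambda>\<omega>. (Yt \<omega>, Dt \<omega>, Zt \<omega>)) =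
      distr M (count_space UNIV \<Otimes>\<^sub>M count_space UNIV \<Otimes>\<^sub>M borel) (\<lambda>\<omega>. (Y \<omega>, D \<omega>, Z \<omega>))"
    "indep_rv M' borel Zt (count_space UNIV) (\<lambda>\<omega>. (Y0 \<omega>, Y1 \<omega>))"
    "\<And>\<omega>. \<omega> \<in> space M' \<Longrightarrow> Yt \<omega> = (if Dt \<omega> then Y1 \<omega> else Y0 \<omega>)"
    "\<And>i j. measure M' {\<omega> \<in> space M'. Y0 \<omega> = i \<and> Y1 \<omega> = j} = p i j"
proof -
  define W where "W x = potential_outcomes (Y (fst x)) (D (fst x)) (fst (snd x))" for x :: "'a \<times> bool \<times> bool"
  interpret M': prob_space "roy_extension p" by (rule prob_space_roy_extension)
  have W [measurable]: "W \<in> roy_extension p \<rightarrow>\<^sub>M count_space UNIV"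
    unfolding W_def roy_extension_def by simp
  have [measurable]: "(\<lambda>x. Z (fst x)) \<in> borel_measurable (roy_extension p)"
    unfolding roy_extension_def by simp
  have joint: "M'.prob ((\<lambda>x. Z (fst x)) -` B \<inter> space (roy_extension p) \<inter> (W -` S \<inter> space (roy_extension p))) =
      (\<Sum>(a, b)\<in>S. p a b) * prob (Z -` B \<inter> space M)" if "B \<in> sets borel" for B S
  proof -
    have "(\<lambda>x. Z (fst x)) -` B \<inter> space (roy_extension p) \<inter> (W -` S \<inter> space (roy_extension p)) =
        {x \<in> space M \<times> UNIV. Z (fst x) \<in> B \<and> potential_outcomes (Y (fst x)) (D (fst x)) (fst (snd x)) \<in> S}"
      by (auto simp: W_def roy_extension_def)
    moreover have "0 \<le> (\<Sum>(a, b)\<in>S. p a b)"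
      using p by (auto simp: prob_vector_def intro!: sum_nonneg)
    ultimately show ?thesis
      using emeasure_roy_extension[OF p compatible that, of S]
      by (simp add: M'.emeasure_eq_measure)
  qed
  have total: "(\<Sum>(a, b)\<in>UNIV. p a b) = 1"
    using p by (simp add: prob_vector_def UNIV_bool_pair)
  have law_W: "M'.prob (W -` S \<inter> space (roy_extension p)) = (\<Sum>(a, b)\<in>S. p a b)" for S
    using joint[of UNIV S] by (simp add: prob_space)
  have law_Z: "M'.prob ((\<lambda>x. Z (fst x)) -` B \<inter> space (roy_extension p)) = prob (Z -` B \<inter> space M)"
    if "B \<in> sets borel" for B
    using joint[OF that, of UNIV] by (simp add: total)
  show thesis
  proof (rule that[of "roy_extension p" "\<lambda>x. Y (fst x)" "\<lambda>x. D (fst x)" "\<lambda>x. Z (fst x)" "\<lambda>x. fst (W x)" "\<lambda>x. snd (W x)"])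
    show "indep_rv (roy_extension p) borel (\<lambda>x. Z (fst x)) (count_space UNIV) (\<lambda>x. (fst (W x), snd (W x)))"
      by (rule M'.indep_rvI) (simp_all add: joint law_W law_Z)
    show "measure (roy_extension p) {x \<in> space (roy_extension p). fst (W x) = i \<and> snd (W x) = j} = p i j" for i j
      using law_W[of "{(i, j)}"] by (simp add: vimage_def Int_def prod_eq_iff conj_commute)
    show "(\<lambda>x. fst (W x)) \<in> roy_extension p \<rightarrow>\<^sub>M count_space UNIV"
      "(\<lambda>x. snd (W x)) \<in> roy_extension p \<rightarrow>\<^sub>M count_space UNIV"
      by (rule measurable_compose[OF W], simp)+
    show "Y (fst x) = (if D (fst x) then snd (W x) else fst (W x))" for x
      unfolding W_def by (rule observed_potential_outcomes[symmetric])
  qed (simp_all add: prob_space_roy_extension distr_roy_extension, simp_all add: roy_extension_def)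
qed

end

theorem theorem2:
  fixes M :: "'a measure"
    and Y D :: "'a \<Rightarrow> bool"
    and Z :: "'a \<Rightarrow> 'z::euclidean_space"
    and q :: "bool \<Rightarrow> bool \<Rightarrow> 'z \<Rightarrow> real"
  assumes "prob_space M"
    and "Y \<in> measurable M (count_space UNIV)"
    and "D \<in> measurable M (count_space UNIV)"
    and "Z \<in> borel_measurable M"
    and "cond_prob_YD_given_Z M Y D Z q"
  shows
    "(\<forall>Y0 Y1 :: 'a \<Rightarrow> bool.
        Y0 \<in> measurable M (count_space UNIV) \<and>
        Y1 \<in> measurable M (count_space UNIV) \<and>
        indep_rv M borel Z (count_space UNIV) (\<lambda>\<omega>. (Y0 \<omega>, Y1 \<omega>)) \<and>
        (\<forall>\<omega>\<in>space M. Y \<omega> = (if D \<omega> then Y1 \<omega> else Y0 \<omega>))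
      \<longrightarrow>
        (AE z in distr M borel Z.
          (let P = (\<lambda>a b. measure M {\<omega> \<in> space M. Y0 \<omega> = a \<and> Y1 \<omega> = b}) in
           0 \<le> P True True \<and> P True True \<le> q True False z + q True True z \<and>
           0 \<le> P False False \<and> P False False \<le> q False False z + q False True z \<and>
           0 \<le> P True False \<and> P True False \<le> q True False z + q False True z \<and>
           0 \<le> P False True \<and> P False True \<le> q False False z + q True True z \<and>
           q True False z \<le> measure M {\<omega> \<in> space M. Y0 \<omega>} \<and>
           measure M {\<omega> \<in> space M. Y0 \<omega>} \<le> 1 - q False False z \<and>
           q True True z \<le> measure M {\<omega> \<in> space M. Y1 \<omega>} \<and>
           measure M {\<omega> \<in> space M. Y1 \<omega>} \<le> 1 - q False True z)))
   \<and>
    (\<forall>p :: bool \<Rightarrow> bool \<Rightarrow> real.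
        (\<forall>i j. 0 \<le> p i j) \<and>
        p False False + p False True + p True False + p True True = 1 \<and>
        (AE z in distr M borel Z.
           p True True \<le> q True False z + q True True z \<and>
           p False False \<le> q False False z + q False True z \<and>
           p True False \<le> q True False z + q False True z \<and>
           p False True \<le> q False False z + q True True z \<and>
           q True False z \<le> p True False + p True True \<and>
           p True False + p True True \<le> 1 - q False False z \<and>
           q True True z \<le> p False True + p True True \<and>
           p False True + p True True \<le> 1 - q False True z)
      \<longrightarrow>
        (\<exists>(M' :: ('a \<times> bool \<times> bool) measure) Yt Dt Zt Y0 Y1.
           prob_space M' \<and>
           Yt \<in> measurable M' (count_space UNIV) \<and>
           Dt \<in> measurable M' (count_space UNIV) \<and>
           Zt \<in> borel_measurable M' \<and>
           Y0 \<in> measurable M' (count_space UNIV) \<and>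
           Y1 \<in> measurable M' (count_space UNIV) \<and>
           distr M' (count_space UNIV \<Otimes>\<^sub>M count_space UNIV \<Otimes>\<^sub>M borel)
                 (\<lambda>\<omega>. (Yt \<omega>, Dt \<omega>, Zt \<omega>))
             = distr M (count_space UNIV \<Otimes>\<^sub>M count_space UNIV \<Otimes>\<^sub>M borel)
                 (\<lambda>\<omega>. (Y \<omega>, D \<omega>, Z \<omega>)) \<and>
           indep_rv M' borel Zt (count_space UNIV) (\<lambda>\<omega>. (Y0 \<omega>, Y1 \<omega>)) \<and>
           (\<forall>\<omega>\<in>space M'. Yt \<omega> = (if Dt \<omega> then Y1 \<omega> else Y0 \<omega>)) \<and>
           (\<forall>i j. measure M' {\<omega> \<in> space M'. Y0 \<omega> = i \<and> Y1 \<omega> = j} = p i j)))"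
proof -
  interpret roy_data M Y D Z q
    using assms by (simp add: roy_data_def roy_data_axioms_def prob_space_def)
  show ?thesis
  proof (intro conjI allI impI, goal_cases)
    case (1 Y0 Y1)
    then interpret roy_model M Y D Z q Y0 Y1
      by unfold_locales auto
    have complement: "prob {\<omega> \<in> space M. \<not> Y0 \<omega>} = 1 - prob {\<omega> \<in> space M. Y0 \<omega>}"
      "prob {\<omega> \<in> space M. \<not> Y1 \<omega>} = 1 - prob {\<omega> \<in> space M. Y1 \<omega>}"
      by (simp_all add: prob_neg)
    show ?case
      using AE_prob_potential_outcomes_le[of True True] AE_prob_potential_outcomes_le[of False False]
        AE_prob_potential_outcomes_le[of True False] AE_prob_potential_outcomes_le[of False True]
        AE_cond_prob_le_prob_Y0[of True] AE_cond_prob_le_prob_Y0[of False]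
        AE_cond_prob_le_prob_Y1[of True] AE_cond_prob_le_prob_Y1[of False]
      by eventually_elim (auto simp: Let_def complement)
  next
    case (2 p)
    then have p: "prob_vector p"
      by (simp add: prob_vector_def)
    have "AE z in law_Z. roy_compatible p (\<lambda>i j. q i j z)"
      using AE_prob_vector_cond_prob 2[THEN conjunct2, THEN conjunct2]
      by eventually_elim (simp add: roy_compatible_def p)
    with p show ?case
      by (rule roy_model_realization) blast
  qed
qed

end
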